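(* Let $V\in L^\infty(\mathbb{R})$ be real-valued and $h>0$. For every $x\in\mathbb{R}$, the operator $\mathbf B(x)$ is bounded on $\ell^2(\mathbb{Z})$ with $$\|\mathbf B(x)\|_{\ell^2\to\ell^2}\le\frac{2}{\pi h}\|V\|_{L^\infty}.$$
   Context: $R^h=\frac1{2h}$, $v_n=(n+\frac12)\frac{\pi}{R^h}=2\pi(n+\frac12)h$, $n\in\mathbb{Z}$. $D_V(x,y)=V(x+y/2)-V(x-y/2)$, $V_w^R(x,v)=\frac{i}{2\pi}\int_{|y|<R^h}D_V(x,y)e^{ivy}\,dy$, $\mathbf A(x)_{nm}=\frac{\pi}{R^h}V_w^R(x,v_n-v_m)$, and $\mathbf B(x)_{nm}=\frac{\operatorname{sign}(v_n)}{\sqrt{|v_n|}}\mathbf A(x)_{nm}\frac{1}{\sqrt{|v_m|}}$. *)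

theory Defs
  imports "HOL-Analysis.Analysis"
begin

definition R_h :: "real \<Rightarrow> real" where
  "R_h h = 1 / (2 * h)"

definition v_n :: "real \<Rightarrow> int \<Rightarrow> real" where
  "v_n h n = (real_of_int n + 1/2) * pi / R_h h"

definition D_V :: "(real \<Rightarrow> real) \<Rightarrow> real \<Rightarrow> real \<Rightarrow> real" where
  "D_V V x y = V (x + y/2) - V (x - y/2)"

definition Vw_R :: "(real \<Rightarrow> real) \<Rightarrow> real \<Rightarrow> real \<Rightarrow> real \<Rightarrow> complex" where
  "Vw_R V h x v = (\<i> / (2 * complex_of_real pi)) *
     (LINT y:{y. \<bar>y\<bar> < R_h h}|lebesgue. complex_of_real (D_V V x y) * exp (\<i> * complex_of_real (v * y)))"

definition A_mat :: "(real \<Rightarrow> real) \<Rightarrow> real \<Rightarrow> real \<Rightarrow> int \<Rightarrow> int \<Rightarrow> complex" where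
  "A_mat V h x n m = complex_of_real (pi / R_h h) * Vw_R V h x (v_n h n - v_n h m)"

definition B_mat :: "(real \<Rightarrow> real) \<Rightarrow> real \<Rightarrow> real \<Rightarrow> int \<Rightarrow> int \<Rightarrow> complex" where
  "B_mat V h x n m = complex_of_real (sgn (v_n h n) / sqrt \<bar>v_n h n\<bar>) * A_mat V h x n m
                     * complex_of_real (1 / sqrt \<bar>v_n h m\<bar>)"

definition is_l2 :: "(int \<Rightarrow> complex) \<Rightarrow> bool" where
  "is_l2 u \<longleftrightarrow> (\<lambda>m. (norm (u m))^2) summable_on UNIV"

definition l2_norm :: "(int \<Rightarrow> complex) \<Rightarrow> real" where
  "l2_norm u = sqrt (\<Sum>\<^sub>\<infinity>m. (norm (u m))^2)"

definition bounded_on_l2_with_norm :: "(int \<Rightarrow> int \<Rightarrow> complex) \<Rightarrow> real \<Rightarrow> bool" where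
  "bounded_on_l2_with_norm M C \<longleftrightarrow>
     (\<forall>u. is_l2 u \<longrightarrow>
        (\<forall>n. (\<lambda>m. M n m * u m) summable_on UNIV) \<and>
        is_l2 (\<lambda>n. \<Sum>\<^sub>\<infinity>m. M n m * u m) \<and>
        l2_norm (\<lambda>n. \<Sum>\<^sub>\<infinity>m. M n m * u m) \<le> C * l2_norm u)"

definition Linf_norm :: "(real \<Rightarrow> real) \<Rightarrow> real" where
  "Linf_norm V = Inf {M. M \<ge> 0 \<and> (AE y in lebesgue. \<bar>V y\<bar> \<le> M)}"

definition in_Linf :: "(real \<Rightarrow> real) \<Rightarrow> bool" where
  "in_Linf V \<longleftrightarrow> V \<in> borel_measurable lebesgue \<and> (\<exists>M. AE y in lebesgue. \<bar>V y\<bar> \<le> M)"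

end

theory Submission
  imports Defs
begin

text \<open>
  Writing R = R^h, the matrix entries are
    B(x)_{nm} = i h \<cdot> sgn(v_n)/\<surd>|v_n| \<cdot> 1/\<surd>|v_m| \<cdot> \<integral>_{-R}^{R} D_V(x,y) e^{i(v_n - v_m)y} dy,
  and the frequencies v_n = (n + 1/2)\<pi>/R form a progression of step \<pi>/R with |v_n| \<ge> \<pi>h.
  Testing B(x) against finitely supported w, u, the bilinear form becomes i h \<integral> D_V P conj(Q)
  for two trigonometric polynomials P, Q; since |D_V| \<le> 2\<parallel>V\<parallel>_\<infinity> and, by orthogonality of the
  exponentials on (-R, R), \<integral>|P|^2 = 2R \<Sum>|coefficients|^2, one gets
    |\<langle>w, B u\<rangle>| \<le> \<parallel>V\<parallel>_\<infinity>/(\<pi>h) (\<parallel>w\<parallel>^2 + \<parallel>u\<parallel>^2).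
\<close>

definition bilinear_bounded :: "(int \<Rightarrow> int \<Rightarrow> complex) \<Rightarrow> real \<Rightarrow> bool" where
  "bilinear_bounded M C \<longleftrightarrow>
     (\<forall>F G w u. finite F \<longrightarrow> finite G \<longrightarrow>
        norm (\<Sum>n\<in>F. \<Sum>m\<in>G. w n * M n m * u m)
          \<le> C * sqrt (\<Sum>n\<in>F. (norm (w n))^2) * sqrt (\<Sum>m\<in>G. (norm (u m))^2))"

lemma bilinear_boundedD:
  assumes "bilinear_bounded M C" and "finite F" and "finite G"
  shows "norm (\<Sum>n\<in>F. \<Sum>m\<in>G. w n * M n m * u m)
           \<le> C * sqrt (\<Sum>n\<in>F. (norm (w n))^2) * sqrt (\<Sum>m\<in>G. (norm (u m))^2)"
  using assms unfolding bilinear_bounded_def by blast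

lemma le_square_if_le_mult_sqrt:
  fixes T B :: real
  assumes T: "0 \<le> T" and le: "T \<le> B * sqrt T"
  shows "T \<le> B^2"
proof (cases "T = 0")
  case False
  then have "sqrt T > 0" using T by simp
  moreover have "sqrt T * sqrt T \<le> B * sqrt T" using le T by simp
  ultimately have "sqrt T \<le> B" by (metis mult_right_le_imp_le)
  then have "sqrt T ^ 2 \<le> B^2" using T by (intro power_mono) auto
  then show ?thesis using T by simp
qed simp

text \<open>The "arithmetic mean" form of a bilinear bound implies the "geometric mean" form,
  by rescaling w by t and u by 1/t, which leaves the bilinear form unchanged.\<close>
lemma bilinear_bounded_if_mean_bound:
  fixes M :: "int \<Rightarrow> int \<Rightarrow> complex"
  assumes mean: "\<And>F G w u. finite F \<Longrightarrow> finite G \<Longrightarrow>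
      norm (\<Sum>n\<in>F. \<Sum>m\<in>G. w n * M n m * u m)
        \<le> C/2 * ((\<Sum>n\<in>F. (norm (w n))^2) + (\<Sum>m\<in>G. (norm (u m))^2))"
  shows "bilinear_bounded M C"
  unfolding bilinear_bounded_def
proof (intro allI impI)
  fix F G :: "int set" and w u :: "int \<Rightarrow> complex"
  assume F: "finite F" and G: "finite G"
  define a where "a = sqrt (\<Sum>n\<in>F. (norm (w n))^2)"
  define b where "b = sqrt (\<Sum>m\<in>G. (norm (u m))^2)"
  have a2: "a^2 = (\<Sum>n\<in>F. (norm (w n))^2)" and b2: "b^2 = (\<Sum>m\<in>G. (norm (u m))^2)"
    unfolding a_def b_def by (simp_all add: sum_nonneg)
  show "norm (\<Sum>n\<in>F. \<Sum>m\<in>G. w n * M n m * u m) \<le> C * a * b"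
  proof (cases "a = 0 \<or> b = 0")
    case True
    then have "(\<forall>n\<in>F. w n = 0) \<or> (\<forall>m\<in>G. u m = 0)"
      using a2 b2 F G by (auto simp: sum_nonneg_eq_0_iff)
    then show ?thesis using True by auto
  next
    case False
    have "a \<ge> 0" "b \<ge> 0" unfolding a_def b_def by (simp_all add: sum_nonneg)
    with False have ab: "a > 0" "b > 0" by auto
    define t where "t = sqrt (b / a)"
    have t: "t > 0" "t^2 = b / a" unfolding t_def using ab by auto
    have "norm (\<Sum>n\<in>F. \<Sum>m\<in>G. w n * M n m * u m)
        = norm (\<Sum>n\<in>F. \<Sum>m\<in>G. (of_real t * w n) * M n m * (u m / of_real t))"
      using t by (intro arg_cong[where f=norm] sum.cong refl) (simp add: field_simps)
    also have "\<dots> \<le> C/2 * (t^2 * a^2 + b^2 / t^2)"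
    proof -
      have "(\<Sum>n\<in>F. (norm (of_real t * w n))^2) = t^2 * (\<Sum>n\<in>F. (norm (w n))^2)"
        by (simp add: norm_mult power_mult_distrib sum_distrib_left)
      moreover have "(\<Sum>m\<in>G. (norm (u m / of_real t))^2) = (\<Sum>m\<in>G. (norm (u m))^2) / t^2"
        by (simp add: norm_divide power_divide sum_divide_distrib)
      ultimately show ?thesis
        using mean[OF F G, of "\<lambda>n. of_real t * w n" "\<lambda>m. u m / of_real t"] a2 b2 by simp
    qed
    also have "t^2 * a^2 + b^2 / t^2 = 2 * (a * b)"
      using t ab by (simp add: field_simps power2_eq_square)
    finally show ?thesis by simp
  qed
qed

text \<open>Testing a bilinear bound against a single row gives an l2 bound for that row.\<close>
lemma row_square_sum_le:
  assumes M: "bilinear_bounded M C" and G: "finite G"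
  shows "(\<Sum>m\<in>G. (norm (M n m))^2) \<le> C^2"
proof (rule le_square_if_le_mult_sqrt)
  define S where "S = (\<Sum>m\<in>G. (norm (M n m))^2)"
  show "0 \<le> S" unfolding S_def by (simp add: sum_nonneg)
  have "complex_of_real S = (\<Sum>n'\<in>{n}. \<Sum>m\<in>G. 1 * M n' m * cnj (M n m))"
    unfolding S_def of_real_sum complex_norm_square by simp
  also have "norm \<dots> \<le> C * sqrt (\<Sum>n'\<in>{n}. (norm (1::complex))^2) * sqrt S"
    using bilinear_boundedD[OF M _ G, of "{n}" "\<lambda>_. 1" "\<lambda>m. cnj (M n m)"] unfolding S_def by simp
  also have "\<dots> = C * sqrt S" by simp
  finally show "S \<le> C * sqrt S" using \<open>0 \<le> S\<close> by simp
qed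

lemma row_summable:
  assumes M: "bilinear_bounded M C" and u: "is_l2 u"
  shows "(\<lambda>m. M n m * u m) summable_on UNIV"
proof (rule abs_summable_summable)
  have "(\<lambda>m. (norm (M n m))^2) summable_on UNIV"
    using row_square_sum_le[OF M]
    by (intro nonneg_bdd_above_summable_on) (auto simp: bdd_above_def)
  then have "(\<lambda>m. (norm (M n m))^2 + (norm (u m))^2) summable_on UNIV"
    using u unfolding is_l2_def by (rule summable_on_add)
  then show "(\<lambda>m. norm (M n m * u m)) summable_on UNIV"
  proof (rule summable_on_comparison_test)
    fix m
    show "norm (M n m * u m) \<le> (norm (M n m))^2 + (norm (u m))^2"
    proof -
      have "2 * (norm (M n m) * norm (u m)) \<le> (norm (M n m))^2 + (norm (u m))^2"
        using sum_squares_bound[of "norm (M n m)" "norm (u m)"] by (simp add: mult.assoc)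
      moreover have "0 \<le> norm (M n m) * norm (u m)" by simp
      ultimately show ?thesis unfolding norm_mult by linarith
    qed
  qed simp
qed

text \<open>Finite pieces of the l2 norm of M u are bounded by (C \<parallel>u\<parallel>)^2: pairing M u with
  its own conjugate on a finite set N is a limit of bilinear forms over finite G.\<close>
lemma image_square_sum_le:
  assumes M: "bilinear_bounded M C" and C: "C \<ge> 0" and u: "is_l2 u" and N: "finite N"
  shows "(\<Sum>n\<in>N. (norm (\<Sum>\<^sub>\<infinity>m. M n m * u m))^2) \<le> (C * l2_norm u)^2"
proof (rule le_square_if_le_mult_sqrt)
  define y where "y n = (\<Sum>\<^sub>\<infinity>m. M n m * u m)" for n
  define T where "T = (\<Sum>n\<in>N. (norm (y n))^2)"
  show T0: "0 \<le> T" unfolding T_def by (simp add: sum_nonneg)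
  have lim: "((\<lambda>G. \<Sum>n\<in>N. cnj (y n) * (\<Sum>m\<in>G. M n m * u m)) \<longlongrightarrow> (\<Sum>n\<in>N. cnj (y n) * y n))
              (finite_subsets_at_top UNIV)"
  proof (intro tendsto_sum tendsto_mult tendsto_const)
    fix n show "((\<lambda>G. \<Sum>m\<in>G. M n m * u m) \<longlongrightarrow> y n) (finite_subsets_at_top UNIV)"
      using row_summable[OF M u, of n] unfolding y_def by (simp add: has_sum_def[symmetric])
  qed
  have bilinear: "norm (\<Sum>n\<in>N. cnj (y n) * (\<Sum>m\<in>G. M n m * u m)) \<le> C * l2_norm u * sqrt T"
    if G: "finite G" for G
  proof -
    have "(\<Sum>m\<in>G. (norm (u m))^2) \<le> (\<Sum>\<^sub>\<infinity>m. (norm (u m))^2)"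
      using u G unfolding is_l2_def by (intro finite_sum_le_infsum) auto
    then have uG: "sqrt (\<Sum>m\<in>G. (norm (u m))^2) \<le> l2_norm u"
      unfolding l2_norm_def by simp
    have "norm (\<Sum>n\<in>N. cnj (y n) * (\<Sum>m\<in>G. M n m * u m))
        = norm (\<Sum>n\<in>N. \<Sum>m\<in>G. cnj (y n) * M n m * u m)"
      by (simp add: sum_distrib_left mult.assoc)
    also have "\<dots> \<le> C * sqrt T * sqrt (\<Sum>m\<in>G. (norm (u m))^2)"
      using bilinear_boundedD[OF M N G, of "\<lambda>n. cnj (y n)" u] by (simp add: T_def)
    also have "\<dots> \<le> C * sqrt T * l2_norm u"
      using uG C T0 by (intro mult_left_mono) auto
    finally show ?thesis by (simp add: mult_ac)
  qed
  have "norm (\<Sum>n\<in>N. cnj (y n) * y n) \<le> C * l2_norm u * sqrt T"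
    by (rule Lim_norm_ubound[OF _ lim eventually_finite_subsets_at_top_weakI[OF bilinear]]) simp
  moreover have "(\<Sum>n\<in>N. cnj (y n) * y n) = complex_of_real T"
    unfolding T_def of_real_sum by (intro sum.cong refl) (simp only: complex_norm_square mult.commute)
  ultimately show "T \<le> C * l2_norm u * sqrt T" using T0 by simp
qed

lemma bounded_on_l2_if_bilinear_bounded:
  assumes M: "bilinear_bounded M C" and C: "C \<ge> 0"
  shows "bounded_on_l2_with_norm M C"
  unfolding bounded_on_l2_with_norm_def
proof (intro allI impI conjI)
  fix u assume u: "is_l2 u"
  show "(\<lambda>m. M n m * u m) summable_on UNIV" for n
    by (rule row_summable[OF M u])
  have fin: "(\<Sum>n\<in>N. (norm (\<Sum>\<^sub>\<infinity>m. M n m * u m))^2) \<le> (C * l2_norm u)^2" if "finite N" for N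
    by (rule image_square_sum_le[OF M C u that])
  then have sq: "(\<lambda>n. (norm (\<Sum>\<^sub>\<infinity>m. M n m * u m))^2) summable_on UNIV"
    by (intro nonneg_bdd_above_summable_on) (auto simp: bdd_above_def)
  then show "is_l2 (\<lambda>n. \<Sum>\<^sub>\<infinity>m. M n m * u m)" unfolding is_l2_def .
  have "(\<Sum>\<^sub>\<infinity>n. (norm (\<Sum>\<^sub>\<infinity>m. M n m * u m))^2) \<le> (C * l2_norm u)^2"
    using sq fin by (intro infsum_le_finite_sums) auto
  then have "l2_norm (\<lambda>n. \<Sum>\<^sub>\<infinity>m. M n m * u m) \<le> sqrt ((C * l2_norm u)^2)"
    unfolding l2_norm_def by (rule real_sqrt_le_mono)
  also have "\<dots> = C * l2_norm u"
    using C by (simp add: l2_norm_def infsum_nonneg)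
  finally show "l2_norm (\<lambda>n. \<Sum>\<^sub>\<infinity>m. M n m * u m) \<le> C * l2_norm u" .
qed

lemma measurable_lebesgue_if_continuous:
  fixes f :: "real \<Rightarrow> 'b::{second_countable_topology,topological_space}"
  assumes "continuous_on UNIV f"
  shows "f \<in> borel_measurable lebesgue"
  using measurable_comp[OF id_borel_measurable_lebesgue borel_measurable_continuous_onI[OF assms]]
  by (simp add: comp_def)

lemma set_integrable_interval_if_bounded:
  fixes f :: "real \<Rightarrow> 'b::{banach, second_countable_topology}"
  assumes f: "f \<in> borel_measurable lebesgue"
    and bound: "AE y in lebesgue. y \<in> {a<..<b} \<longrightarrow> norm (f y) \<le> K"
  shows "set_integrable lebesgue {a<..<b} f"
proof (rule set_integrable_bound[where f="\<lambda>_. K"])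
  have interval: "{a<..<b} \<in> sets lebesgue" "emeasure lebesgue {a<..<b} < \<infinity>"
    using lmeasurable_interval(2)[of a b] by (auto simp: fmeasurable_def)
  then show "set_integrable lebesgue {a<..<b} (\<lambda>_. K)"
    unfolding set_integrable_def
    by (intro integrable_scaleR_left integrable_real_indicator) auto
  show "set_borel_measurable lebesgue {a<..<b} f"
    using interval unfolding set_borel_measurable_def
    by (intro borel_measurable_scaleR borel_measurable_indicator f)
  show "AE x in lebesgue. x \<in> {a<..<b} \<longrightarrow> norm (f x) \<le> norm K"
    using bound by eventually_elim auto
qed

lemma set_integral_sum:
  fixes f :: "'i \<Rightarrow> 'a \<Rightarrow> 'b::{banach, second_countable_topology}"
  assumes "\<And>i. i \<in> I \<Longrightarrow> set_integrable M A (f i)"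
  shows "set_integrable M A (\<lambda>y. \<Sum>i\<in>I. f i y)"
    and "(LINT y:A|M. \<Sum>i\<in>I. f i y) = (\<Sum>i\<in>I. LINT y:A|M. f i y)"
  using assms unfolding set_integrable_def set_lebesgue_integral_def scaleR_sum_right
  by (auto intro!: Bochner_Integration.integral_sum)

lemma exp_i_measurable: "(\<lambda>y::real. exp (\<i> * complex_of_real (k * y))) \<in> borel_measurable lebesgue"
  by (intro measurable_lebesgue_if_continuous continuous_intros)

lemma exp_i_set_integrable: "set_integrable lebesgue {a<..<b} (\<lambda>y::real. exp (\<i> * complex_of_real (k * y)))"
  by (rule set_integrable_interval_if_bounded[OF exp_i_measurable, where K=1]) simp

lemma exp_orthogonality:
  fixes R :: real and j :: int
  assumes R: "R > 0"
  shows "(LINT y:{-R<..<R}|lebesgue. exp (\<i> * complex_of_real (pi * j / R * y)))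
       = (if j = 0 then complex_of_real (2 * R) else 0)"
proof -
  define k where "k = pi * j / R"
  define f where "f y = exp (\<i> * complex_of_real (k * y))" for y
  have "(f has_integral (if j = 0 then complex_of_real (2 * R) else 0)) {-R..R}"
  proof (cases "j = 0")
    case True
    have "((\<lambda>y. complex_of_real y) has_vector_derivative 1) (at y within {-R..R})" for y
      by (rule has_vector_derivative_real_field) (auto intro!: derivative_eq_intros)
    from fundamental_theorem_of_calculus[OF _ this] R
    have "((\<lambda>_. 1::complex) has_integral (complex_of_real R - complex_of_real (-R))) {-R..R}"
      by simp
    moreover have "f = (\<lambda>_. 1)" using True by (simp add: f_def k_def fun_eq_iff)
    ultimately show ?thesis using True by simp
  next
    case False
    then have k: "k \<noteq> 0" using R by (simp add: k_def)
    define G where "G z = exp (\<i> * complex_of_real k * z) / (\<i> * complex_of_real k)" for z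
    have "((\<lambda>y. G (complex_of_real y)) has_vector_derivative f y) (at y within {-R..R})" for y
    proof (rule has_vector_derivative_real_field)
      show "(G has_field_derivative f y) (at (complex_of_real y))"
        unfolding G_def f_def using k by (auto intro!: derivative_eq_intros simp: field_simps)
    qed
    from fundamental_theorem_of_calculus[OF _ this] R
    have "(f has_integral (G (complex_of_real R) - G (complex_of_real (-R)))) {-R..R}" by simp
    moreover have "G (complex_of_real R) = G (complex_of_real (-R))"
    proof -
      have "\<i> * complex_of_real k * complex_of_real R
          = \<i> * complex_of_real k * complex_of_real (-R) + of_int (2 * j) * pi * \<i>"
        using R by (simp add: k_def field_simps)
      then have "exp (\<i> * complex_of_real k * complex_of_real R)
          = exp (\<i> * complex_of_real k * complex_of_real (-R))"
        unfolding exp_eq by (rule exI[where x=j])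
      then show ?thesis unfolding G_def by (rule arg_cong[where f="\<lambda>z. z / (\<i> * complex_of_real k)"])
    qed
    ultimately show ?thesis using False by simp
  qed
  then have "(f has_integral (if j = 0 then complex_of_real (2 * R) else 0)) {-R<..<R}"
    by (simp add: has_integral_Icc_iff_Ioo)
  moreover have "(f has_integral (LINT y:{-R<..<R}|lebesgue. f y)) {-R<..<R}"
    unfolding f_def by (rule has_integral_set_lebesgue[OF exp_i_set_integrable])
  ultimately have "(LINT y:{-R<..<R}|lebesgue. f y) = (if j = 0 then complex_of_real (2 * R) else 0)"
    by (rule has_integral_unique[rotated])
  then show ?thesis unfolding f_def k_def .
qed

text \<open>Parseval's identity for trigonometric polynomials whose frequencies form an arithmetic
  progression of step \<pi>/R: the exponentials are orthogonal on (-R, R), each of squared norm 2R.\<close>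
lemma trig_poly_parseval:
  fixes c :: "int \<Rightarrow> complex" and \<phi> :: "int \<Rightarrow> real"
  assumes R: "R > 0" and F: "finite F"
    and \<phi>: "\<And>n m. \<phi> n - \<phi> m = pi * of_int (n - m) / R"
  defines "P \<equiv> \<lambda>y. \<Sum>n\<in>F. c n * exp (\<i> * complex_of_real (\<phi> n * y))"
  shows "set_integrable lebesgue {-R<..<R} (\<lambda>y. (norm (P y))^2)"
    and "(LINT y:{-R<..<R}|lebesgue. (norm (P y))^2) = 2 * R * (\<Sum>n\<in>F. (norm (c n))^2)"
proof -
  define e where "e n m y = exp (\<i> * complex_of_real (pi * of_int (n - m) / R * y))" for n m y
  show "set_integrable lebesgue {-R<..<R} (\<lambda>y. (norm (P y))^2)"
  proof (rule set_integrable_interval_if_bounded)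
    show "(\<lambda>y. (norm (P y))^2) \<in> borel_measurable lebesgue"
      unfolding P_def by (intro measurable_lebesgue_if_continuous continuous_intros)
    have "norm (P y) \<le> (\<Sum>n\<in>F. norm (c n))" for y
      unfolding P_def by (rule order.trans[OF norm_sum]) (simp add: norm_mult)
    then show "AE y in lebesgue. y \<in> {-R<..<R} \<longrightarrow> norm ((norm (P y))^2) \<le> (\<Sum>n\<in>F. norm (c n))^2"
      by (auto intro!: power_mono)
  qed
  have expand: "complex_of_real ((norm (P y))^2) = (\<Sum>n\<in>F. \<Sum>m\<in>F. c n * cnj (c m) * e n m y)" for y
  proof -
    have "exp (\<i> * complex_of_real (\<phi> n * y)) * exp (- (\<i> * complex_of_real (\<phi> m * y))) = e n m y"
      for n m
      unfolding e_def \<phi>[symmetric] by (subst exp_add[symmetric]) (simp add: algebra_simps)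
    then show ?thesis
      unfolding complex_norm_square P_def
      by (simp add: sum_product exp_cnj mult_ac)
  qed
  have orth: "(LINT y:{-R<..<R}|lebesgue. e n m y) = (if n = m then complex_of_real (2 * R) else 0)"
    for n m
    using exp_orthogonality[OF R, of "n - m"] unfolding e_def by simp
  have "complex_of_real (LINT y:{-R<..<R}|lebesgue. (norm (P y))^2)
      = (LINT y:{-R<..<R}|lebesgue. \<Sum>n\<in>F. \<Sum>m\<in>F. c n * cnj (c m) * e n m y)"
    unfolding set_integral_complex_of_real[symmetric] expand ..
  also have "\<dots> = (\<Sum>n\<in>F. \<Sum>m\<in>F. c n * cnj (c m) * (LINT y:{-R<..<R}|lebesgue. e n m y))"
  proof -
    have summand: "set_integrable lebesgue {-R<..<R} (\<lambda>y. c n * cnj (c m) * e n m y)" for n m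
      unfolding e_def by (intro set_integrable_mult_right exp_i_set_integrable)
    then show ?thesis by (simp add: set_integral_sum)
  qed
  also have "\<dots> = (\<Sum>n\<in>F. complex_of_real (2 * R) * (c n * cnj (c n)))"
    unfolding orth by (simp add: if_distrib sum.delta'[OF F] mult_ac cong: if_cong)
  also have "\<dots> = complex_of_real (2 * R * (\<Sum>n\<in>F. (norm (c n))^2))"
    by (simp only: complex_norm_square of_real_mult of_real_sum sum_distrib_left)
  finally show "(LINT y:{-R<..<R}|lebesgue. (norm (P y))^2) = 2 * R * (\<Sum>n\<in>F. (norm (c n))^2)"
    unfolding of_real_eq_iff .
qed

lemma exp_i_diff:
  "exp (\<i> * complex_of_real (p * y)) * exp (- (\<i> * complex_of_real (q * y)))
     = exp (\<i> * complex_of_real ((p - q) * y))"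
  by (subst exp_add[symmetric]) (simp add: algebra_simps)

lemma fourier_matrix_bilinear_eq_integral:
  fixes D :: "real \<Rightarrow> real" and \<phi> :: "int \<Rightarrow> real" and a b :: "int \<Rightarrow> complex"
  assumes Dm: "D \<in> borel_measurable lebesgue" and Db: "AE y in lebesgue. \<bar>D y\<bar> \<le> K"
    and F: "finite F" and G: "finite G"
  defines "P \<equiv> \<lambda>y. \<Sum>n\<in>F. a n * exp (\<i> * complex_of_real (\<phi> n * y))"
    and "Q \<equiv> \<lambda>y. \<Sum>m\<in>G. cnj (b m) * exp (\<i> * complex_of_real (\<phi> m * y))"
  shows "set_integrable lebesgue {-R<..<R} (\<lambda>y. complex_of_real (D y) * (P y * cnj (Q y)))"
    and "(\<Sum>n\<in>F. \<Sum>m\<in>G. a n * b m *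
            (LINT y:{-R<..<R}|lebesgue. complex_of_real (D y) * exp (\<i> * complex_of_real ((\<phi> n - \<phi> m) * y))))
         = (LINT y:{-R<..<R}|lebesgue. complex_of_real (D y) * (P y * cnj (Q y)))"
proof -
  define f where "f n m y = a n * b m * (complex_of_real (D y) * exp (\<i> * complex_of_real ((\<phi> n - \<phi> m) * y)))"
    for n m y
  have f_int: "set_integrable lebesgue {-R<..<R} (f n m)" for n m
    unfolding f_def
  proof (intro set_integrable_mult_right set_integrable_interval_if_bounded[where K=K])
    show "(\<lambda>y. complex_of_real (D y) * exp (\<i> * complex_of_real ((\<phi> n - \<phi> m) * y))) \<in> borel_measurable lebesgue"
      using Dm exp_i_measurable[of "\<phi> n - \<phi> m"] by measurable
    show "AE y in lebesgue. y \<in> {-R<..<R} \<longrightarrow>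
        norm (complex_of_real (D y) * exp (\<i> * complex_of_real ((\<phi> n - \<phi> m) * y))) \<le> K"
      using Db by eventually_elim (simp add: norm_mult)
  qed
  have expand: "complex_of_real (D y) * (P y * cnj (Q y)) = (\<Sum>n\<in>F. \<Sum>m\<in>G. f n m y)" for y
  proof -
    have conj_Q: "cnj (Q y) = (\<Sum>m\<in>G. b m * exp (- (\<i> * complex_of_real (\<phi> m * y))))"
      unfolding Q_def cnj_sum by (simp add: exp_cnj del: of_real_mult)
    have "complex_of_real (D y) * (P y * cnj (Q y))
        = (\<Sum>n\<in>F. \<Sum>m\<in>G. complex_of_real (D y) *
             ((a n * exp (\<i> * complex_of_real (\<phi> n * y))) * (b m * exp (- (\<i> * complex_of_real (\<phi> m * y))))))"
      unfolding P_def conj_Q sum_product by (simp only: sum_distrib_left)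
    also have "\<dots> = (\<Sum>n\<in>F. \<Sum>m\<in>G. f n m y)"
      unfolding f_def exp_i_diff[symmetric] by (simp only: mult_ac)
    finally show ?thesis .
  qed
  show "set_integrable lebesgue {-R<..<R} (\<lambda>y. complex_of_real (D y) * (P y * cnj (Q y)))"
    unfolding expand by (intro set_integral_sum(1) f_int)
  have "(\<Sum>n\<in>F. \<Sum>m\<in>G. LINT y:{-R<..<R}|lebesgue. f n m y)
      = (LINT y:{-R<..<R}|lebesgue. complex_of_real (D y) * (P y * cnj (Q y)))"
    unfolding expand by (simp add: set_integral_sum f_int)
  then show "(\<Sum>n\<in>F. \<Sum>m\<in>G. a n * b m *
            (LINT y:{-R<..<R}|lebesgue. complex_of_real (D y) * exp (\<i> * complex_of_real ((\<phi> n - \<phi> m) * y))))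
         = (LINT y:{-R<..<R}|lebesgue. complex_of_real (D y) * (P y * cnj (Q y)))"
    unfolding f_def by simp
qed

text \<open>Hence, if |D| \<le> K and the frequencies form a progression of step \<pi>/R, the bilinear form is
  at most K/2 (\<parallel>P\<parallel>^2 + \<parallel>Q\<parallel>^2) in L2(-R, R), which Parseval evaluates to K R (\<parallel>a\<parallel>^2 + \<parallel>b\<parallel>^2).\<close>
lemma fourier_matrix_bilinear_bound:
  fixes D :: "real \<Rightarrow> real" and \<phi> :: "int \<Rightarrow> real" and a b :: "int \<Rightarrow> complex"
  assumes R: "R > 0" and K: "K \<ge> 0"
    and Dm: "D \<in> borel_measurable lebesgue" and Db: "AE y in lebesgue. \<bar>D y\<bar> \<le> K"
    and \<phi>: "\<And>n m. \<phi> n - \<phi> m = pi * of_int (n - m) / R"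
    and F: "finite F" and G: "finite G"
  shows "norm (\<Sum>n\<in>F. \<Sum>m\<in>G. a n * b m *
            (LINT y:{-R<..<R}|lebesgue. complex_of_real (D y) * exp (\<i> * complex_of_real ((\<phi> n - \<phi> m) * y))))
         \<le> K * R * ((\<Sum>n\<in>F. (norm (a n))^2) + (\<Sum>m\<in>G. (norm (b m))^2))"
proof -
  define S where "S = {-R<..<R}"
  define P where "P y = (\<Sum>n\<in>F. a n * exp (\<i> * complex_of_real (\<phi> n * y)))" for y
  define Q where "Q y = (\<Sum>m\<in>G. cnj (b m) * exp (\<i> * complex_of_real (\<phi> m * y)))" for y
  note integral = fourier_matrix_bilinear_eq_integral[OF Dm Db F G, where a=a and \<phi>=\<phi> and b=b and R=R, folded P_def Q_def S_def]
  note parseval_P = trig_poly_parseval[OF R F \<phi>, where c=a, folded P_def S_def]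
  note parseval_Q = trig_poly_parseval[OF R G \<phi>, where c="\<lambda>m. cnj (b m)", folded Q_def S_def]
  have pointwise: "norm (complex_of_real (D y) * (P y * cnj (Q y))) \<le> K/2 * ((norm (P y))^2 + (norm (Q y))^2)"
    if "\<bar>D y\<bar> \<le> K" for y
  proof -
    have "norm (complex_of_real (D y) * (P y * cnj (Q y))) = \<bar>D y\<bar> * (norm (P y) * norm (Q y))"
      by (simp add: norm_mult)
    also have "\<dots> \<le> K * (norm (P y) * norm (Q y))"
      using that by (intro mult_right_mono) auto
    also have "\<dots> \<le> K * (((norm (P y))^2 + (norm (Q y))^2) / 2)"
      using K sum_squares_bound[of "norm (P y)" "norm (Q y)"] by (intro mult_left_mono) auto
    finally show ?thesis by simp
  qed
  have bound_int: "set_integrable lebesgue S (\<lambda>y. K/2 * ((norm (P y))^2 + (norm (Q y))^2))"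
    using parseval_P(1) parseval_Q(1) by (intro set_integrable_mult_right set_integral_add(1))
  have "norm (LINT y:S|lebesgue. complex_of_real (D y) * (P y * cnj (Q y)))
      \<le> (LINT y:S|lebesgue. norm (complex_of_real (D y) * (P y * cnj (Q y))))"
    by (rule set_integral_norm_bound[OF integral(1)])
  also have "\<dots> \<le> (LINT y:S|lebesgue. K/2 * ((norm (P y))^2 + (norm (Q y))^2))"
  proof (intro set_integral_mono_AE set_integrable_norm integral(1) bound_int)
    show "AE y\<in>S in lebesgue. norm (complex_of_real (D y) * (P y * cnj (Q y)))
        \<le> K/2 * ((norm (P y))^2 + (norm (Q y))^2)"
      using Db by eventually_elim (blast intro: pointwise)
  qed
  also have "\<dots> = K * R * ((\<Sum>n\<in>F. (norm (a n))^2) + (\<Sum>m\<in>G. (norm (b m))^2))"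
    using parseval_P parseval_Q by (simp add: set_integral_add(2) algebra_simps)
  finally show ?thesis unfolding S_def[symmetric] integral(2) .
qed

lemma Linf_norm_bound:
  assumes "in_Linf V"
  shows "Linf_norm V \<ge> 0" and "AE z in lebesgue. \<bar>V z\<bar> \<le> Linf_norm V"
proof -
  define Ms where "Ms = {M. M \<ge> 0 \<and> (AE y in lebesgue. \<bar>V y\<bar> \<le> M)}"
  have L: "Linf_norm V = Inf Ms" unfolding Linf_norm_def Ms_def ..
  obtain M0 where "AE y in lebesgue. \<bar>V y\<bar> \<le> M0" using assms unfolding in_Linf_def by auto
  then have "max M0 0 \<in> Ms" unfolding Ms_def by (auto elim: eventually_mono)
  then have nonempty: "Ms \<noteq> {}" by auto
  show "Linf_norm V \<ge> 0" unfolding L by (rule cInf_greatest[OF nonempty]) (auto simp: Ms_def)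
  have "AE z in lebesgue. \<bar>V z\<bar> \<le> Inf Ms + 1 / real (Suc k)" for k
  proof -
    obtain M where "M \<in> Ms" "M < Inf Ms + 1 / real (Suc k)"
      using cInf_lessD[OF nonempty, of "Inf Ms + 1 / real (Suc k)"] by auto
    then show ?thesis unfolding Ms_def by (auto elim: eventually_mono)
  qed
  then have "AE z in lebesgue. \<forall>k. \<bar>V z\<bar> \<le> Inf Ms + 1 / real (Suc k)"
    by (simp add: AE_all_countable)
  then show "AE z in lebesgue. \<bar>V z\<bar> \<le> Linf_norm V"
  proof eventually_elim
    case (elim z)
    show ?case unfolding L
    proof (rule field_le_epsilon)
      fix e :: real assume "e > 0"
      then obtain k where k: "inverse (real (Suc k)) < e" using reals_Archimedean by blast
      have "\<bar>V z\<bar> \<le> Inf Ms + 1 / real (Suc k)" using elim by blast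
      then show "\<bar>V z\<bar> \<le> Inf Ms + e" using k unfolding inverse_eq_divide by linarith
    qed
  qed
qed

text \<open>Almost-everywhere bounds survive a nondegenerate affine change of variables, since
  such maps send Lebesgue null sets to null sets.\<close>
lemma AE_bound_affine:
  fixes V :: "real \<Rightarrow> real"
  assumes Vm: "V \<in> borel_measurable lebesgue" and ae: "AE z in lebesgue. \<bar>V z\<bar> \<le> L"
    and c: "c \<noteq> 0"
  shows "AE y in lebesgue. \<bar>V (t + c * y)\<bar> \<le> L"
proof -
  have T: "(\<lambda>y. t + c * y) \<in> lebesgue \<rightarrow>\<^sub>M lebesgue"
    using lebesgue_affine_measurable[where c= "\<lambda>x::real. c"] c by simp
  have "AE z in density (distr lebesgue lebesgue (\<lambda>y. t + c * y)) (\<lambda>_. ennreal \<bar>c\<bar>). \<bar>V z\<bar> \<le> L"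
    using ae by (subst (asm) lebesgue_real_affine[OF c, of t])
  then have "AE z in distr lebesgue lebesgue (\<lambda>y. t + c * y). \<bar>V z\<bar> \<le> L"
    using c by (subst (asm) AE_density) auto
  moreover have "{z \<in> space lebesgue. \<bar>V z\<bar> \<le> L} \<in> sets lebesgue"
    using Vm by measurable
  ultimately show ?thesis by (subst (asm) AE_distr_iff[OF T]) auto
qed

lemma D_V_measurable_bounded:
  assumes V: "in_Linf V"
  shows "D_V V x \<in> borel_measurable lebesgue"
    and "AE y in lebesgue. \<bar>D_V V x y\<bar> \<le> 2 * Linf_norm V"
proof -
  have Vm: "V \<in> borel_measurable lebesgue" using V by (simp add: in_Linf_def)
  have D: "D_V V x = (\<lambda>y. V (x + (1/2) *\<^sub>R y) - V (x + (-1/2) *\<^sub>R y))"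
    by (auto simp: D_V_def fun_eq_iff)
  show "D_V V x \<in> borel_measurable lebesgue" unfolding D
    by (intro borel_measurable_diff borel_measurable_affine[OF Vm]) auto
  have "AE y in lebesgue. \<bar>V (x + (1/2) * y)\<bar> \<le> Linf_norm V"
    and "AE y in lebesgue. \<bar>V (x + (-1/2) * y)\<bar> \<le> Linf_norm V"
    by (intro AE_bound_affine[OF Vm Linf_norm_bound(2)[OF V]]; simp)+
  then show "AE y in lebesgue. \<bar>D_V V x y\<bar> \<le> 2 * Linf_norm V"
    by eventually_elim (simp add: D)
qed

lemma v_n_diff: "v_n h n - v_n h m = pi * of_int (n - m) / R_h h"
  by (simp add: v_n_def diff_divide_distrib[symmetric] algebra_simps)

lemma v_n_abs_ge:
  assumes h: "h > 0"
  shows "\<bar>v_n h n\<bar> \<ge> pi * h"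
proof -
  have "v_n h n = of_int (2 * n + 1) * (pi * h)"
    using h by (simp add: v_n_def R_h_def field_simps)
  moreover have "\<bar>2 * n + 1\<bar> \<ge> 1" by presburger
  then have "\<bar>real_of_int (2 * n + 1)\<bar> * (pi * h) \<ge> 1 * (pi * h)"
    using h by (intro mult_right_mono) (linarith, simp)
  ultimately show ?thesis using h by (simp add: abs_mult)
qed

text \<open>Unfolding the definitions: since (\<pi>/R^h) \<cdot> i/(2\<pi>) = i h, the matrix B(x) is i h times the matrix
  of Fourier coefficients of D_V(x, \<cdot>) on (-R^h, R^h), weighted by sgn(v_n)/\<surd>|v_n| and 1/\<surd>|v_m|.\<close>
lemma B_mat_eq:
  assumes h: "h > 0"
  shows "B_mat V h x n m = (\<i> * complex_of_real h) *
           (complex_of_real (sgn (v_n h n) / sqrt \<bar>v_n h n\<bar>) * complex_of_real (1 / sqrt \<bar>v_n h m\<bar>) *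
            (LINT y:{-R_h h<..<R_h h}|lebesgue.
               complex_of_real (D_V V x y) * exp (\<i> * complex_of_real ((v_n h n - v_n h m) * y))))"
proof -
  have interval: "{y. \<bar>y\<bar> < R_h h} = {-R_h h<..<R_h h}" by auto
  have const: "complex_of_real (pi / R_h h) * (\<i> / (2 * complex_of_real pi)) = \<i> * complex_of_real h"
    using h by (simp add: R_h_def field_simps)
  show ?thesis
    unfolding B_mat_def A_mat_def Vw_R_def interval const[symmetric] by (simp only: mult_ac)
qed

lemma B_weights_bound:
  assumes h: "h > 0"
  shows "(norm (complex_of_real (sgn (v_n h n) / sqrt \<bar>v_n h n\<bar>)))^2 \<le> 1 / (pi * h)"
    and "(norm (complex_of_real (1 / sqrt \<bar>v_n h n\<bar>)))^2 \<le> 1 / (pi * h)"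
proof -
  have pih: "pi * h > 0" using h by simp
  then have v: "\<bar>v_n h n\<bar> > 0" using v_n_abs_ge[OF h, of n] by linarith
  have inv: "1 / \<bar>v_n h n\<bar> \<le> 1 / (pi * h)"
    using v_n_abs_ge[OF h, of n] pih by (intro divide_left_mono) auto
  have "(norm (complex_of_real (sgn (v_n h n) / sqrt \<bar>v_n h n\<bar>)))^2 = 1 / \<bar>v_n h n\<bar>"
    and "(norm (complex_of_real (1 / sqrt \<bar>v_n h n\<bar>)))^2 = 1 / \<bar>v_n h n\<bar>"
    using v by (simp_all add: norm_divide power_divide abs_sgn sgn_if)
  with inv show "(norm (complex_of_real (sgn (v_n h n) / sqrt \<bar>v_n h n\<bar>)))^2 \<le> 1 / (pi * h)"
    and "(norm (complex_of_real (1 / sqrt \<bar>v_n h n\<bar>)))^2 \<le> 1 / (pi * h)"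
    by simp_all
qed

lemma B_weighted_square_sums_le:
  assumes h: "h > 0"
  shows "(\<Sum>n\<in>F. (norm (w n * complex_of_real (sgn (v_n h n) / sqrt \<bar>v_n h n\<bar>)))^2)
           \<le> 1 / (pi * h) * (\<Sum>n\<in>F. (norm (w n))^2)"
    and "(\<Sum>m\<in>G. (norm (complex_of_real (1 / sqrt \<bar>v_n h m\<bar>) * u m))^2)
           \<le> 1 / (pi * h) * (\<Sum>m\<in>G. (norm (u m))^2)"
proof -
  have "(norm (w n * complex_of_real (sgn (v_n h n) / sqrt \<bar>v_n h n\<bar>)))^2
      \<le> 1 / (pi * h) * (norm (w n))^2" for n
    unfolding norm_mult power_mult_distrib mult.commute[of _ "(norm (w n))^2"]
    by (intro mult_left_mono B_weights_bound(1)[OF h]) simp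
  then show "(\<Sum>n\<in>F. (norm (w n * complex_of_real (sgn (v_n h n) / sqrt \<bar>v_n h n\<bar>)))^2)
      \<le> 1 / (pi * h) * (\<Sum>n\<in>F. (norm (w n))^2)"
    unfolding sum_distrib_left by (rule sum_mono)
  have "(norm (complex_of_real (1 / sqrt \<bar>v_n h m\<bar>) * u m))^2 \<le> 1 / (pi * h) * (norm (u m))^2" for m
    unfolding norm_mult power_mult_distrib
    by (intro mult_right_mono B_weights_bound(2)[OF h]) simp
  then show "(\<Sum>m\<in>G. (norm (complex_of_real (1 / sqrt \<bar>v_n h m\<bar>) * u m))^2)
      \<le> 1 / (pi * h) * (\<Sum>m\<in>G. (norm (u m))^2)"
    unfolding sum_distrib_left by (rule sum_mono)
qed

text \<open>The bilinear estimate for B(x) in arithmetic-mean form: by B_mat_eq and the Fourier-matrix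
  bound with K = 2\<parallel>V\<parallel>_\<infinity>, R = R^h (so that h K R = \<parallel>V\<parallel>_\<infinity>), and then the weight bounds.\<close>
lemma B_mat_bilinear_mean_bound:
  assumes V: "in_Linf V" and h: "h > 0" and F: "finite F" and G: "finite G"
  shows "norm (\<Sum>n\<in>F. \<Sum>m\<in>G. w n * B_mat V h x n m * u m)
           \<le> (2 / (pi * h) * Linf_norm V) / 2 * ((\<Sum>n\<in>F. (norm (w n))^2) + (\<Sum>m\<in>G. (norm (u m))^2))"
proof -
  define L where "L = Linf_norm V"
  define c where "c n = w n * complex_of_real (sgn (v_n h n) / sqrt \<bar>v_n h n\<bar>)" for n
  define d where "d m = complex_of_real (1 / sqrt \<bar>v_n h m\<bar>) * u m" for m
  have L: "L \<ge> 0" unfolding L_def by (rule Linf_norm_bound(1)[OF V])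
  have R: "R_h h > 0" and hR: "h * R_h h = 1/2" using h by (simp_all add: R_h_def)
  have "norm (\<Sum>n\<in>F. \<Sum>m\<in>G. w n * B_mat V h x n m * u m)
      = h * norm (\<Sum>n\<in>F. \<Sum>m\<in>G. c n * d m *
          (LINT y:{-R_h h<..<R_h h}|lebesgue.
             complex_of_real (D_V V x y) * exp (\<i> * complex_of_real ((v_n h n - v_n h m) * y))))"
  proof -
    have "(\<Sum>n\<in>F. \<Sum>m\<in>G. w n * B_mat V h x n m * u m)
        = (\<i> * complex_of_real h) * (\<Sum>n\<in>F. \<Sum>m\<in>G. c n * d m *
            (LINT y:{-R_h h<..<R_h h}|lebesgue.
               complex_of_real (D_V V x y) * exp (\<i> * complex_of_real ((v_n h n - v_n h m) * y))))"
      unfolding B_mat_eq[OF h] c_def d_def sum_distrib_left by (simp only: mult_ac)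
    then show ?thesis using h by (simp add: norm_mult)
  qed
  also have "\<dots> \<le> h * (2 * L * R_h h * ((\<Sum>n\<in>F. (norm (c n))^2) + (\<Sum>m\<in>G. (norm (d m))^2)))"
    using h L D_V_measurable_bounded[OF V, of x] v_n_diff F G R
    by (intro mult_left_mono fourier_matrix_bilinear_bound) (auto simp: L_def)
  also have "\<dots> = L * ((\<Sum>n\<in>F. (norm (c n))^2) + (\<Sum>m\<in>G. (norm (d m))^2))"
  proof -
    have "h * (2 * L * R_h h * X) = 2 * (h * R_h h) * (L * X)" for X by (simp add: mult_ac)
    then show ?thesis unfolding hR by simp
  qed
  also have "\<dots> \<le> L * (1 / (pi * h) * (\<Sum>n\<in>F. (norm (w n))^2) + 1 / (pi * h) * (\<Sum>m\<in>G. (norm (u m))^2))"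
    using L B_weighted_square_sums_le(1)[OF h, where F=F and w=w]
      B_weighted_square_sums_le(2)[OF h, where G=G and u=u] unfolding c_def d_def
    by (intro mult_left_mono add_mono) auto
  also have "\<dots> = (2 / (pi * h) * L) / 2 * ((\<Sum>n\<in>F. (norm (w n))^2) + (\<Sum>m\<in>G. (norm (u m))^2))"
    by (simp add: algebra_simps)
  finally show ?thesis unfolding L_def .
qed

theorem mainTheorem8:
  fixes V :: "real \<Rightarrow> real" and h :: real and x :: real
  assumes "in_Linf V" and "h > 0"
  shows "bounded_on_l2_with_norm (B_mat V h x) (2 / (pi * h) * Linf_norm V)"
proof (rule bounded_on_l2_if_bilinear_bounded)
  show "bilinear_bounded (B_mat V h x) (2 / (pi * h) * Linf_norm V)"
    using B_mat_bilinear_mean_bound[OF assms] by (rule bilinear_bounded_if_mean_bound)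
  show "0 \<le> 2 / (pi * h) * Linf_norm V"
    using Linf_norm_bound(1)[OF assms(1)] assms(2) by simp
qed

end
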